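(* Let $(M,\circ)$ be a fuzzy $\Gamma$-hypersemigroup, and define for $a,b\in M$, $\gamma\in\Gamma$: $a\ast\gamma\ast b=\{x\in M : (a\circ\gamma\circ b)(x)>0\}$. Then $(M,\ast)$ is a $\Gamma$-hypersemigroup.
   Context: $M,\Gamma$ are nonempty sets; a fuzzy subset of $M$ is a map $M\to[0,1]$. A fuzzy $\Gamma$-hyperoperation assigns to each $(a,\gamma,b)\in M\times\Gamma\times M$ a fuzzy subset $a\circ\gamma\circ b$. For $a\in M$ and fuzzy $\mu$: $(a\circ\gamma\circ\mu)(r)=\bigvee_{t\in M}((a\circ\gamma\circ t)(r)\wedge\mu(t))$ if $\mu\ne0$, else $0$; $(\mu\circ\gamma\circ a)(r)=\bigvee_{t\in M}(\mu(t)\wedge(t\circ\gamma\circ a)(r))$ if $\mu\ne0$, else $0$. $(M,\circ)$ is a fuzzy $\Gamma$-hypersemigroup if $(a\circ\alpha\circ b)\circ\beta\circ c=a\circ\alpha\circ(b\circ\beta\circ c)$ for all $a,b,c\in M$, $\alpha,\beta\in\Gamma$. A $\Gamma$-hypersemigroup is a set $M$ together with, for each $\gamma\in\Gamma$, a map $(x,y)\mapsto x\gamma y\subseteq M$, extended to subsets by $A\gamma B=\bigcup_{a\in A,b\in B}a\gamma b$, satisfying $(x\alpha y)\beta z=x\alpha(y\beta z)$ for all $x,y,z\in M$, $\alpha,\beta\in\Gamma$. *)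

theory Defs
  imports Complex_Main
begin

text \<open>M and \<Gamma> are modelled as the (nonempty) types 'm and 'g.
A fuzzy \<Gamma>-hyperoperation is f :: 'm \<Rightarrow> 'g \<Rightarrow> 'm \<Rightarrow> ('m \<Rightarrow> real),
where f a \<gamma> b is the fuzzy subset a\<circ>\<gamma>\<circ>b.\<close>

definition fuzzy_subset :: "('m \<Rightarrow> real) \<Rightarrow> bool" where
  "fuzzy_subset \<mu> \<longleftrightarrow> (\<forall>x. 0 \<le> \<mu> x \<and> \<mu> x \<le> 1)"

definition fuzzy_hyperop :: "('m \<Rightarrow> 'g \<Rightarrow> 'm \<Rightarrow> ('m \<Rightarrow> real)) \<Rightarrow> bool" where
  "fuzzy_hyperop f \<longleftrightarrow> (\<forall>a \<gamma> b. fuzzy_subset (f a \<gamma> b))"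

definition fuzzy_elem_left ::
  "('m \<Rightarrow> 'g \<Rightarrow> 'm \<Rightarrow> ('m \<Rightarrow> real)) \<Rightarrow> 'm \<Rightarrow> 'g \<Rightarrow> ('m \<Rightarrow> real) \<Rightarrow> 'm \<Rightarrow> real" where
  "fuzzy_elem_left f a \<gamma> \<mu> r =
     (if \<mu> = (\<lambda>_. 0) then 0 else (SUP t. min (f a \<gamma> t r) (\<mu> t)))"

definition fuzzy_elem_right ::
  "('m \<Rightarrow> 'g \<Rightarrow> 'm \<Rightarrow> ('m \<Rightarrow> real)) \<Rightarrow> ('m \<Rightarrow> real) \<Rightarrow> 'g \<Rightarrow> 'm \<Rightarrow> 'm \<Rightarrow> real" where
  "fuzzy_elem_right f \<mu> \<gamma> a r =
     (if \<mu> = (\<lambda>_. 0) then 0 else (SUP t. min (\<mu> t) (f t \<gamma> a r)))"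

definition fuzzy_Gamma_hypersemigroup :: "('m \<Rightarrow> 'g \<Rightarrow> 'm \<Rightarrow> ('m \<Rightarrow> real)) \<Rightarrow> bool" where
  "fuzzy_Gamma_hypersemigroup f \<longleftrightarrow> fuzzy_hyperop f \<and>
     (\<forall>a b c \<alpha> \<beta>. fuzzy_elem_right f (f a \<alpha> b) \<beta> c = fuzzy_elem_left f a \<alpha> (f b \<beta> c))"

definition set_hyperop :: "('m \<Rightarrow> 'g \<Rightarrow> 'm \<Rightarrow> 'm set) \<Rightarrow> 'm set \<Rightarrow> 'g \<Rightarrow> 'm set \<Rightarrow> 'm set" where
  "set_hyperop h A \<gamma> B = (\<Union>a\<in>A. \<Union>b\<in>B. h a \<gamma> b)"

definition Gamma_hypersemigroup :: "('m \<Rightarrow> 'g \<Rightarrow> 'm \<Rightarrow> 'm set) \<Rightarrow> bool" where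
  "Gamma_hypersemigroup h \<longleftrightarrow>
     (\<forall>x y z \<alpha> \<beta>. set_hyperop h (h x \<alpha> y) \<beta> {z} = set_hyperop h {x} \<alpha> (h y \<beta> z))"

definition support_hyperop :: "('m \<Rightarrow> 'g \<Rightarrow> 'm \<Rightarrow> ('m \<Rightarrow> real)) \<Rightarrow> 'm \<Rightarrow> 'g \<Rightarrow> 'm \<Rightarrow> 'm set" where
  "support_hyperop f a \<gamma> b = {x. f a \<gamma> b x > 0}"

end

theory Submission
  imports Defs
begin

text \<open>A supremum of minima of fuzzy memberships is positive exactly when some minimum is,
i.e. when both memberships are positive at a common point.  Applied to the two sides of
the fuzzy associativity law, this identifies the support of (a\<circ>\<alpha>\<circ>b)\<circ>\<beta>\<circ>c with
(a\<ast>\<alpha>\<ast>b)\<ast>\<beta>\<ast>c and the support of a\<circ>\<alpha>\<circ>(b\<circ>\<beta>\<circ>c) with a\<ast>\<alpha>\<ast>(b\<ast>\<beta>\<ast>c), so the crisp law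
is the fuzzy one read through supports.\<close>

lemma zero_less_SUP_min_iff:
  fixes g h :: "'a \<Rightarrow> real"
  assumes "\<And>t. g t \<le> B"
  shows "0 < (SUP t. min (g t) (h t)) \<longleftrightarrow> (\<exists>t. 0 < g t \<and> 0 < h t)"
proof -
  have "bdd_above (range (\<lambda>t. min (g t) (h t)))"
    using assms by (intro bdd_aboveI[where M = B]) (auto simp: min_le_iff_disj)
  then show ?thesis by (simp add: less_cSUP_iff)
qed

lemma fuzzy_hyperop_le_one: "fuzzy_hyperop f \<Longrightarrow> f a \<gamma> b x \<le> 1"
  by (simp add: fuzzy_hyperop_def fuzzy_subset_def)

lemma support_fuzzy_elem_right:
  assumes "fuzzy_hyperop f"
  shows "{r. 0 < fuzzy_elem_right f \<mu> \<gamma> c r}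
           = set_hyperop (support_hyperop f) {t. 0 < \<mu> t} \<gamma> {c}"
proof (cases "\<mu> = (\<lambda>_. 0)")
  case False
  have "0 < (SUP t. min (\<mu> t) (f t \<gamma> c r)) \<longleftrightarrow> (\<exists>t. 0 < \<mu> t \<and> 0 < f t \<gamma> c r)" for r
    using zero_less_SUP_min_iff[of "\<lambda>t. f t \<gamma> c r" 1 \<mu>] fuzzy_hyperop_le_one[OF assms]
    by (simp add: min.commute conj_commute)
  with False show ?thesis
    by (auto simp: fuzzy_elem_right_def set_hyperop_def support_hyperop_def)
qed (simp add: fuzzy_elem_right_def set_hyperop_def)

lemma support_fuzzy_elem_left:
  assumes "fuzzy_hyperop f"
  shows "{r. 0 < fuzzy_elem_left f a \<gamma> \<mu> r}
           = set_hyperop (support_hyperop f) {a} \<gamma> {t. 0 < \<mu> t}"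
proof (cases "\<mu> = (\<lambda>_. 0)")
  case False
  have "0 < (SUP t. min (f a \<gamma> t r) (\<mu> t)) \<longleftrightarrow> (\<exists>t. 0 < f a \<gamma> t r \<and> 0 < \<mu> t)" for r
    using zero_less_SUP_min_iff[of "\<lambda>t. f a \<gamma> t r" 1 \<mu>] fuzzy_hyperop_le_one[OF assms]
    by simp
  with False show ?thesis
    by (auto simp: fuzzy_elem_left_def set_hyperop_def support_hyperop_def)
qed (simp add: fuzzy_elem_left_def set_hyperop_def)

theorem theorem4p17:
  fixes f :: "'m \<Rightarrow> 'g \<Rightarrow> 'm \<Rightarrow> ('m \<Rightarrow> real)"
  assumes "fuzzy_Gamma_hypersemigroup f"
  shows "Gamma_hypersemigroup (support_hyperop f)"
  unfolding Gamma_hypersemigroup_def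
proof (intro allI)
  fix x y z \<alpha> \<beta>
  have hyperop: "fuzzy_hyperop f"
    and assoc: "fuzzy_elem_right f (f x \<alpha> y) \<beta> z = fuzzy_elem_left f x \<alpha> (f y \<beta> z)"
    using assms by (auto simp: fuzzy_Gamma_hypersemigroup_def)
  have "set_hyperop (support_hyperop f) (support_hyperop f x \<alpha> y) \<beta> {z}
          = {r. 0 < fuzzy_elem_right f (f x \<alpha> y) \<beta> z r}"
    by (simp add: support_fuzzy_elem_right[OF hyperop] support_hyperop_def)
  also have "\<dots> = {r. 0 < fuzzy_elem_left f x \<alpha> (f y \<beta> z) r}"
    by (simp add: assoc)
  also have "\<dots> = set_hyperop (support_hyperop f) {x} \<alpha> (support_hyperop f y \<beta> z)"
    by (simp add: support_fuzzy_elem_left[OF hyperop] support_hyperop_def)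
  finally show "set_hyperop (support_hyperop f) (support_hyperop f x \<alpha> y) \<beta> {z}
                  = set_hyperop (support_hyperop f) {x} \<alpha> (support_hyperop f y \<beta> z)" .
qed

end
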